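(* Assume (A-f), (A-J), (A-TW), (A-nd), and $J\in\mathbb{B}^\alpha_{1,\infty}(\Omega;\delta)$ for some $\alpha\in(0,1)$; let $(\phi,c)$ be as in (A-TW). Let $u(t,x)$ be the unique entire solution of $\partial_tu=Lu+f(u)$ in $\mathbb{R}\times\overline\Omega$ such that $0<u<1$ and $\partial_tu>0$ in $\mathbb{R}\times\overline\Omega$ and $|u(t,x)-\phi(x_1+ct)|\to0$ as $t\to-\infty$ uniformly in $x\in\overline\Omega$. Then, writing $x=(x_1,x')\in\mathbb{R}\times\mathbb{R}^{N-1}$, $$\lim_{x_1\to-\infty}u(t,x)=0\quad\text{and}\quad\lim_{x_1\to+\infty}u(t,x)=1\quad\text{for all }(t,x')\in\mathbb{R}\times\mathbb{R}^{N-1}.$$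
   Context: $K\subset\mathbb{R}^N$ is compact and $\Omega:=\mathbb{R}^N\setminus K$ is connected. A distance $\delta$ on $E\subset\mathbb{R}^N$ is quasi-Euclidean if $\delta(x,y)=|x-y|$ whenever $[x,y]\subset E$ and $\delta(x,y)\ge|x-y|$ for all $x,y\in E$; $\delta$ is a quasi-Euclidean distance on $\overline\Omega$. For measurable $J:[0,\infty)\to[0,\infty)$ with $|\mathrm{supp}(J)|>0$ and $x\in\overline\Omega$, $\Pi_0(J,x)=\{x\}$, $\Pi_{j+1}(J,x)=\bigcup_{z\in\Pi_j(J,x)}\mathrm{supp}(J(\delta(\cdot,z)))$; $(\Omega,\delta)$ has the $J$-covering property if $\overline\Omega=\bigcup_{j}\Pi_j(J,x)$ for all $x\in\overline\Omega$. Notation: $J_{\mathrm{rad}}(z)=J(|z|)$, $\mathcal{J}^\delta(x)=\int_\Omega J(\delta(x,z))dz$, $J_1(s)=\int_{\mathbb{R}^{N-1}}J_{\mathrm{rad}}(s,y')dy'$, $Lu(x)=\int_\Omega J(\delta(x,y))(u(y)-u(x))dy$. (A-f): $f:[0,1]\to\mathbb{R}$, $f\in C^{1,1}([0,1])$, $\exists\theta\in(0,1)$: $f(0)=f(\theta)=f(1)=0$, $f<0$ on $(0,\theta)$, $f>0$ on $(\theta,1)$, $f'(0)<0$, $f'(\theta)>0$, $f'(1)<0$. (A-J): $J$ measurable, compactly supported, $|\mathrm{supp}J|>0$; $(\Omega,\delta)$ has the $J$-covering property; $\int_{\mathbb{R}^N}J_{\mathrm{rad}}=1$; for every $y\in\overline\Omega$,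 $\|J(\delta(y,\cdot))-J(\delta(z,\cdot))\|_{L^1(\Omega)}\to0$ as $z\to y$; $\mathcal{J}^\delta\in L^\infty(\Omega)$. (A-TW): there exist increasing $\phi\in C(\mathbb{R})$, $c>0$ with $c\phi'=J_1*\phi-\phi+f(\phi)$, $\phi(-\infty)=0$, $\phi(+\infty)=1$. (A-nd): $\max_{[0,1]}f'<\inf_\Omega\mathcal{J}^\delta$. $\mathbb{B}^\alpha_{1,\infty}(\Omega;\delta)$: $g:[0,\infty)\to\mathbb{R}$ with $g(|\cdot|)\in L^1(\mathbb{R}^N)$ and $\sup_{y\ne z\in\Omega}\|g(\delta(y,\cdot))-g(\delta(z,\cdot))\|_{L^1(\Omega)}/|y-z|^\alpha<\infty$. *)

theory Defs
  imports "HOL-Analysis.Analysis"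
begin

(* Space R^N is modelled as real \<times> 'm with 'm a Euclidean space of dimension N-1;
   the first component is the coordinate x_1. *)

definition distance_on :: "'a set \<Rightarrow> ('a \<Rightarrow> 'a \<Rightarrow> real) \<Rightarrow> bool" where
  "distance_on E \<delta> \<longleftrightarrow>
     (\<forall>x\<in>E. \<forall>y\<in>E. \<delta> x y = 0 \<longleftrightarrow> x = y) \<and>
     (\<forall>x\<in>E. \<forall>y\<in>E. \<delta> x y = \<delta> y x) \<and>
     (\<forall>x\<in>E. \<forall>y\<in>E. \<forall>z\<in>E. \<delta> x z \<le> \<delta> x y + \<delta> y z)"

definition quasi_euclidean :: "'a::euclidean_space set \<Rightarrow> ('a \<Rightarrow> 'a \<Rightarrow> real) \<Rightarrow> bool" where
  "quasi_euclidean E \<delta> \<longleftrightarrow> distance_on E \<delta> \<and>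
     (\<forall>x\<in>E. \<forall>y\<in>E. closed_segment x y \<subseteq> E \<longrightarrow> \<delta> x y = dist x y) \<and>
     (\<forall>x\<in>E. \<forall>y\<in>E. \<delta> x y \<ge> dist x y)"

definition supp_on :: "'a::topological_space set \<Rightarrow> ('a \<Rightarrow> real) \<Rightarrow> 'a set" where
  "supp_on E g = closure {y\<in>E. g y \<noteq> 0}"

fun Pi_J :: "(real \<Rightarrow> real) \<Rightarrow> ('a \<Rightarrow> 'a \<Rightarrow> real) \<Rightarrow> 'a::topological_space set \<Rightarrow> nat \<Rightarrow> 'a \<Rightarrow> 'a set" where
  "Pi_J J \<delta> E 0 x = {x}"
| "Pi_J J \<delta> E (Suc j) x = (\<Union>z\<in>Pi_J J \<delta> E j x. supp_on E (\<lambda>y. J (\<delta> y z)))"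

definition J_covering :: "(real \<Rightarrow> real) \<Rightarrow> ('a \<Rightarrow> 'a \<Rightarrow> real) \<Rightarrow> 'a::topological_space set \<Rightarrow> bool" where
  "J_covering J \<delta> \<Omega> \<longleftrightarrow> (\<forall>x\<in>closure \<Omega>. closure \<Omega> = (\<Union>j. Pi_J J \<delta> (closure \<Omega>) j x))"

definition calJ :: "(real \<Rightarrow> real) \<Rightarrow> ('a \<Rightarrow> 'a \<Rightarrow> real) \<Rightarrow> 'a::euclidean_space set \<Rightarrow> 'a \<Rightarrow> ennreal" where
  "calJ J \<delta> \<Omega> x = (\<integral>\<^sup>+ z. ennreal (J (\<delta> x z)) * indicator \<Omega> z \<partial>lborel)"

definition L1dist_on :: "'a::euclidean_space set \<Rightarrow> ('a \<Rightarrow> real) \<Rightarrow> ('a \<Rightarrow> real) \<Rightarrow> ennreal" where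
  "L1dist_on \<Omega> g h = (\<integral>\<^sup>+ w. ennreal \<bar>g w - h w\<bar> * indicator \<Omega> w \<partial>lborel)"

definition J1 :: "(real \<Rightarrow> real) \<Rightarrow> 'm::euclidean_space itself \<Rightarrow> real \<Rightarrow> real" where
  "J1 J _ s = (\<integral> y. J (norm (s, y::'m)) \<partial>lborel)"

definition conv :: "(real \<Rightarrow> real) \<Rightarrow> (real \<Rightarrow> real) \<Rightarrow> real \<Rightarrow> real" where
  "conv g h s = (\<integral> r. g r * h (s - r) \<partial>lborel)"

definition Lop :: "(real \<Rightarrow> real) \<Rightarrow> ('a \<Rightarrow> 'a \<Rightarrow> real) \<Rightarrow> 'a::euclidean_space set \<Rightarrow> ('a \<Rightarrow> real) \<Rightarrow> 'a \<Rightarrow> real" where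
  "Lop J \<delta> \<Omega> v x = (\<integral> y. indicator \<Omega> y * (J (\<delta> x y) * (v y - v x)) \<partial>lborel)"

definition A_f :: "(real \<Rightarrow> real) \<Rightarrow> (real \<Rightarrow> real) \<Rightarrow> real \<Rightarrow> bool" where
  "A_f f f' \<theta> \<longleftrightarrow>
     (\<forall>s\<in>{0..1}. (f has_real_derivative f' s) (at s within {0..1})) \<and>
     (\<exists>Lc. \<forall>s\<in>{0..1}. \<forall>t\<in>{0..1}. \<bar>f' s - f' t\<bar> \<le> Lc * \<bar>s - t\<bar>) \<and>
     0 < \<theta> \<and> \<theta> < 1 \<and> f 0 = 0 \<and> f \<theta> = 0 \<and> f 1 = 0 \<and>
     (\<forall>s\<in>{0<..<\<theta>}. f s < 0) \<and> (\<forall>s\<in>{\<theta><..<1}. f s > 0) \<and>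
     f' 0 < 0 \<and> f' \<theta> > 0 \<and> f' 1 < 0"

definition A_J :: "(real \<Rightarrow> real) \<Rightarrow> ('a \<Rightarrow> 'a \<Rightarrow> real) \<Rightarrow> 'a::euclidean_space set \<Rightarrow> bool" where
  "A_J J \<delta> \<Omega> \<longleftrightarrow>
     (\<forall>s\<ge>0. J s \<ge> 0) \<and>
     set_borel_measurable lborel {0..} J \<and>
     bounded (supp_on {0..} J) \<and>
     emeasure lborel (supp_on {0..} J) > 0 \<and>
     J_covering J \<delta> \<Omega> \<and>
     (\<integral>\<^sup>+ z. ennreal (J (norm z)) \<partial>(lborel :: 'a measure)) = 1 \<and>
     (\<forall>y\<in>closure \<Omega>. ((\<lambda>z. L1dist_on \<Omega> (\<lambda>w. J (\<delta> y w)) (\<lambda>w. J (\<delta> z w))) \<longlongrightarrow> 0)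
                         (at y within closure \<Omega>)) \<and>
     (\<exists>M. AE x in lborel. x \<in> \<Omega> \<longrightarrow> calJ J \<delta> \<Omega> x \<le> ennreal M)"

definition A_TW :: "'m::euclidean_space itself \<Rightarrow> (real \<Rightarrow> real) \<Rightarrow> (real \<Rightarrow> real) \<Rightarrow> (real \<Rightarrow> real) \<Rightarrow> real \<Rightarrow> bool" where
  "A_TW _ J f \<phi> c \<longleftrightarrow>
     continuous_on UNIV \<phi> \<and> strict_mono \<phi> \<and> c > 0 \<and>
     (\<forall>s. (\<phi> has_real_derivative
            (conv (J1 J TYPE('m)) \<phi> s - \<phi> s + f (\<phi> s)) / c) (at s)) \<and>
     (\<phi> \<longlongrightarrow> 0) at_bot \<and> (\<phi> \<longlongrightarrow> 1) at_top"

definition A_nd :: "(real \<Rightarrow> real) \<Rightarrow> (real \<Rightarrow> real) \<Rightarrow> ('a \<Rightarrow> 'a \<Rightarrow> real) \<Rightarrow> 'a::euclidean_space set \<Rightarrow> bool" where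
  "A_nd J f' \<delta> \<Omega> \<longleftrightarrow> ennreal (Sup (f' ` {0..1})) < (INF x\<in>\<Omega>. calJ J \<delta> \<Omega> x)"

definition Besov_1inf :: "real \<Rightarrow> ('a \<Rightarrow> 'a \<Rightarrow> real) \<Rightarrow> 'a::euclidean_space set \<Rightarrow> (real \<Rightarrow> real) \<Rightarrow> bool" where
  "Besov_1inf \<alpha> \<delta> \<Omega> g \<longleftrightarrow>
     integrable (lborel :: 'a measure) (\<lambda>z. g (norm z)) \<and>
     (\<exists>C. \<forall>y\<in>\<Omega>. \<forall>z\<in>\<Omega>. y \<noteq> z \<longrightarrow>
        L1dist_on \<Omega> (\<lambda>w. g (\<delta> y w)) (\<lambda>w. g (\<delta> z w)) \<le> ennreal (C * dist y z powr \<alpha>))"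

end

theory Submission
  imports Defs
begin

(*
  The limit 1 as x1 \<rightarrow> +\<infinity> comes from monotonicity in time: at an early time u is uniformly
  close to the front \<phi>(x1 + c t), which is close to 1 far to the right, and u only grows later.

  The limit 0 as x1 \<rightarrow> -\<infinity> needs a barrier. Since J vanishes beyond some \<rho> and has mass 1,
  at points x whose \<rho>-ball avoids K we have Lu(x) \<le> max_{B(x,\<rho>)} u - u(x). If u \<le> a on
  {x1 \<le> R} at time T, and f(v) \<le> L (v - a) for v \<ge> a, comparison for the ODE in t and
  induction on k give u(t, x) \<le> a + e^{L(t-T)} (t-T)^k / k! on {x1 \<le> R - k \<rho>};
  the bound tends to a as k \<rightarrow> \<infinity>, and a can be taken arbitrarily small.
*)

lemma DERIV_comparison:
  fixes v w v' w' :: "real \<Rightarrow> real"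
  assumes "a \<le> b"
    and v: "\<And>t. a \<le> t \<Longrightarrow> t \<le> b \<Longrightarrow> (v has_real_derivative v' t) (at t)"
    and w: "\<And>t. a \<le> t \<Longrightarrow> t \<le> b \<Longrightarrow> (w has_real_derivative w' t) (at t)"
    and init: "v a \<le> w a"
    and step: "\<And>t. a \<le> t \<Longrightarrow> t \<le> b \<Longrightarrow> w t < v t \<Longrightarrow> v' t - w' t \<le> L * (v t - w t)"
  shows "v b \<le> w b"
proof (rule ccontr)
  assume "\<not> v b \<le> w b"
  \<comment> \<open>\<open>h' \<le> 0\<close> wherever \<open>h > 0\<close>; apply the mean value theorem after the last time \<open>h \<le> 0\<close>.\<close>
  define h where "h t = exp (- L * t) * (v t - w t)" for t
  have hb: "h b > 0"
    using \<open>\<not> v b \<le> w b\<close> by (simp add: h_def)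
  have h': "(h has_real_derivative exp (- L * t) * ((v' t - w' t) - L * (v t - w t))) (at t)"
    if "a \<le> t" "t \<le> b" for t
    unfolding h_def
    by (rule derivative_eq_intros refl v w that)+ (simp add: algebra_simps)
  have cont: "continuous_on {a..b} h"
    by (rule continuous_at_imp_continuous_on) (use h' DERIV_isCont in force)
  define S where "S = {a..b} \<inter> h -` {..0}"
  have "closed S"
    unfolding S_def by (rule continuous_closed_preimage[OF cont]) auto
  moreover have "a \<in> S"
    using init \<open>a \<le> b\<close> by (simp add: S_def h_def mult_nonneg_nonpos)
  moreover have "bdd_above S"
    unfolding S_def by (rule bdd_aboveI[of _ b]) auto
  ultimately have t0: "Sup S \<in> S" and above: "\<And>z. z \<in> S \<Longrightarrow> z \<le> Sup S"
    using closed_contains_Sup cSup_upper by blast+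
  define t0 where "t0 = Sup S"
  have "a \<le> t0" "h t0 \<le> 0"
    using t0 by (auto simp: S_def t0_def)
  have "t0 < b"
    using t0 hb by (auto simp: S_def t0_def less_le)
  then obtain z where z: "t0 < z" "z < b"
    and mvt: "h b - h t0 = (b - t0) * (exp (- L * z) * ((v' z - w' z) - L * (v z - w z)))"
    using MVT2[OF \<open>t0 < b\<close>, of h "\<lambda>t. exp (- L * t) * ((v' t - w' t) - L * (v t - w t))"]
      h' \<open>a \<le> t0\<close> by (meson order.trans less_imp_le)
  have "z \<notin> S"
    using above z(1) unfolding t0_def by force
  then have "w z < v z"
    using z \<open>a \<le> t0\<close> by (auto simp: S_def h_def not_le zero_less_mult_iff)
  then have "h b - h t0 \<le> 0"
    using step[of z] z \<open>a \<le> t0\<close> mvt by (simp add: mult_nonneg_nonpos)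
  with hb \<open>h t0 \<le> 0\<close> show False by simp
qed

lemma A_f_lipschitz:
  assumes "A_f f f' \<theta>"
  obtains B where "0 \<le> B"
    and "\<And>v w. v \<in> {0..1} \<Longrightarrow> w \<in> {0..1} \<Longrightarrow> \<bar>f v - f w\<bar> \<le> B * \<bar>v - w\<bar>"
proof -
  from assms obtain Lc where Lc: "\<forall>s\<in>{0..1}. \<forall>t\<in>{0..1}. \<bar>f' s - f' t\<bar> \<le> Lc * \<bar>s - t\<bar>"
    and f': "\<And>s. s \<in> {0..1} \<Longrightarrow> (f has_real_derivative f' s) (at s within {0..1})"
    unfolding A_f_def by blast
  define B where "B = \<bar>f' 0\<bar> + \<bar>Lc\<bar>"
  have "norm (f' s) \<le> B" if "s \<in> {0..1}" for s
  proof -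
    have "\<bar>f' s - f' 0\<bar> \<le> Lc * \<bar>s\<bar>"
      using Lc that by force
    also have "\<dots> \<le> \<bar>Lc\<bar>"
      using that mult_right_mono[OF abs_ge_self, of s Lc] mult_left_le[of s "\<bar>Lc\<bar>"] by auto
    finally show ?thesis
      unfolding B_def by simp
  qed
  then have "\<bar>f v - f w\<bar> \<le> B * \<bar>v - w\<bar>" if "v \<in> {0..1}" "w \<in> {0..1}" for v w
    using field_differentiable_bound[of "{0..1}" f f' B v w] f' that by auto
  moreover have "0 \<le> B"
    unfolding B_def by simp
  ultimately show thesis
    using that by blast
qed

lemma A_f_le_linear:
  assumes "A_f f f' \<theta>"
  obtains L where "0 \<le> L"
    and "\<And>a v. 0 \<le> a \<Longrightarrow> a \<le> \<theta> \<Longrightarrow> a \<le> v \<Longrightarrow> v \<le> 1 \<Longrightarrow> f v \<le> L * (v - a)"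
proof -
  from assms have \<theta>: "0 < \<theta>" "\<theta> < 1" "f 0 = 0" "f \<theta> = 0" "\<forall>s\<in>{0<..<\<theta>}. f s < 0"
    unfolding A_f_def by blast+
  obtain L where "0 \<le> L" and lip: "\<And>v w. v \<in> {0..1} \<Longrightarrow> w \<in> {0..1} \<Longrightarrow> \<bar>f v - f w\<bar> \<le> L * \<bar>v - w\<bar>"
    using A_f_lipschitz[OF assms] by blast
  show thesis
  proof (rule that[OF \<open>0 \<le> L\<close>])
    fix a v :: real
    assume "0 \<le> a" "a \<le> \<theta>" "a \<le> v" "v \<le> 1"
    show "f v \<le> L * (v - a)"
    proof (cases "v \<le> \<theta>")
      case True
      then have "v = 0 \<or> v = \<theta> \<or> v \<in> {0<..<\<theta>}"
        using \<open>0 \<le> a\<close> \<open>a \<le> v\<close> by auto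
      then have "f v \<le> 0"
        using \<theta> by (auto simp del: greaterThanLessThan_iff)
      also have "0 \<le> L * (v - a)"
        using \<open>0 \<le> L\<close> \<open>a \<le> v\<close> by simp
      finally show ?thesis .
    next
      case False
      then have "f v \<le> L * (v - \<theta>)"
        using lip[of v \<theta>] \<theta> \<open>v \<le> 1\<close> by simp
      also have "\<dots> \<le> L * (v - a)"
        using \<open>0 \<le> L\<close> \<open>a \<le> \<theta>\<close> by (simp add: mult_left_mono)
      finally show ?thesis .
    qed
  qed
qed

lemma A_J_vanishes_far:
  assumes "A_J J \<delta> \<Omega>"
  obtains \<rho> where "0 < \<rho>" "\<And>s. \<rho> < s \<Longrightarrow> J s = 0"
proof -
  from assms obtain r where r: "\<And>s. s \<in> supp_on {0..} J \<Longrightarrow> norm s \<le> r"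
    unfolding A_J_def bounded_iff by auto
  show thesis
  proof
    show "0 < max r 1"
      by simp
    fix s :: real
    assume s: "max r 1 < s"
    show "J s = 0"
    proof (rule ccontr)
      assume "J s \<noteq> 0"
      then have "s \<in> supp_on {0..} J"
        unfolding supp_on_def using s by (intro closure_subset[THEN subsetD]) auto
      with r[of s] s show False
        by simp
    qed
  qed
qed

lemma A_J_kernel_has_integral_1:
  fixes x :: "'a::euclidean_space"
  assumes "A_J J \<delta> (\<Omega> :: 'a set)"
  shows "has_bochner_integral lborel (\<lambda>y. J (dist x y)) 1"
proof -
  from assms have nonneg: "\<And>s. 0 \<le> s \<Longrightarrow> 0 \<le> J s"
    and meas: "set_borel_measurable lborel {0..} J"
    and one: "(\<integral>\<^sup>+ z. ennreal (J (norm z)) \<partial>(lborel :: 'a measure)) = 1"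
    unfolding A_J_def by auto
  \<comment> \<open>Only the restriction of \<open>J\<close> to \<open>[0, \<infinity>)\<close> is known to be measurable.\<close>
  have "(\<lambda>s. indicator {0..} s *\<^sub>R J s) \<in> borel_measurable borel"
    using meas unfolding set_borel_measurable_def by simp
  then have "(\<lambda>z. indicator {0..} (norm z) *\<^sub>R J (norm z)) \<in> borel_measurable (borel :: 'a measure)"
    by (rule measurable_compose[OF borel_measurable_norm])
  then have J_meas: "(\<lambda>z. J (norm z)) \<in> borel_measurable (borel :: 'a measure)"
    by simp
  have "(\<lambda>y. J (norm (- x + y))) \<in> borel_measurable lborel"
    by (rule measurable_compose[OF _ J_meas]) simp
  then have J_dist_meas: "(\<lambda>y. J (dist x y)) \<in> borel_measurable lborel"
    by (simp add: dist_norm norm_minus_commute)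
  have "(\<integral>\<^sup>+ y. ennreal (J (dist x y)) \<partial>lborel)
      = (\<integral>\<^sup>+ y. ennreal (J (norm (- x + y))) \<partial>lborel)"
    by (simp add: dist_norm norm_minus_commute)
  also have "\<dots> = (\<integral>\<^sup>+ z. ennreal (J (norm z)) \<partial>distr lborel borel ((+) (- x)))"
    using J_meas by (subst nn_integral_distr) auto
  also have "\<dots> = 1"
    using one by (simp add: lborel_distr_plus)
  finally show ?thesis
    using J_dist_meas nonneg by (intro has_bochner_integral_nn_integral) auto
qed

lemma integrable_mult_bounded:
  fixes f g :: "'a \<Rightarrow> real"
  assumes f: "integrable M f" and g: "g \<in> borel_measurable M" and "\<And>x. \<bar>g x\<bar> \<le> B"
  shows "integrable M (\<lambda>x. f x * g x)"
proof (rule Bochner_Integration.integrable_bound)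
  show "integrable M (\<lambda>x. f x * B)"
    using f by (rule integrable_mult_left)
  show "(\<lambda>x. f x * g x) \<in> borel_measurable M"
    using borel_measurable_integrable[OF f] g by (rule borel_measurable_times)
  have "\<bar>g x\<bar> \<le> \<bar>B\<bar>" for x
    using \<open>\<bar>g x\<bar> \<le> B\<close> by linarith
  then show "AE x in M. norm (f x * g x) \<le> norm (f x * B)"
    by (intro AE_I2) (simp add: abs_mult mult_left_mono)
qed

lemma quasi_euclidean_kernel_eq_on_cball:
  fixes x y :: "'a::euclidean_space" and J :: "real \<Rightarrow> real"
  assumes \<delta>: "quasi_euclidean (closure \<Omega>) \<delta>"
    and J_vanishes: "\<And>s. \<rho> < s \<Longrightarrow> J s = 0"
    and "0 \<le> \<rho>" and ball: "cball x \<rho> \<subseteq> \<Omega>"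
  shows "indicator \<Omega> y * J (\<delta> x y) = indicator (cball x \<rho>) y * J (dist x y)"
proof -
  have \<Omega>: "\<Omega> \<subseteq> closure \<Omega>"
    by (rule closure_subset)
  with ball \<open>0 \<le> \<rho>\<close> have x: "x \<in> closure \<Omega>"
    using centre_in_cball[of x \<rho>] by blast
  show ?thesis
  proof (cases "y \<in> cball x \<rho>")
    case True
    then have "closed_segment x y \<subseteq> cball x \<rho>"
      using \<open>0 \<le> \<rho>\<close> by (intro closed_segment_subset) auto
    then have "\<delta> x y = dist x y"
      using \<delta> ball True x \<Omega> unfolding quasi_euclidean_def by blast
    then show ?thesis
      using True ball by auto
  next
    case False
    show ?thesis
    proof (cases "y \<in> \<Omega>")
      case True
      then have "dist x y \<le> \<delta> x y"
        using \<delta> x \<Omega> unfolding quasi_euclidean_def by blast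
      then show ?thesis
        using False J_vanishes by simp
    qed (use False in simp)
  qed
qed

lemma Lop_le_sup_on_cball:
  fixes \<Omega> :: "'a::euclidean_space set" and v :: "'a \<Rightarrow> real"
  assumes \<delta>: "quasi_euclidean (closure \<Omega>) \<delta>"
    and J: "A_J J \<delta> \<Omega>" "\<And>s. \<rho> < s \<Longrightarrow> J s = 0"
    and "0 \<le> \<rho>" and ball: "cball x \<rho> \<subseteq> \<Omega>"
    and v_cont: "continuous_on (cball x \<rho>) v"
    and G: "\<And>y. y \<in> cball x \<rho> \<Longrightarrow> v y \<le> G"
  shows "Lop J \<delta> \<Omega> v x \<le> G - v x"
proof -
  have kernel_int: "integrable lborel (\<lambda>y. J (dist x y))"
    and kernel_1: "integral\<^sup>L lborel (\<lambda>y. J (dist x y)) = 1"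
    using A_J_kernel_has_integral_1[OF J(1)] unfolding has_bochner_integral_iff by blast+
  have J_nonneg: "0 \<le> J (dist x y)" for y
    using J(1) unfolding A_J_def by simp
  have "x \<in> cball x \<rho>"
    using \<open>0 \<le> \<rho>\<close> by simp
  define h where "h y = indicator (cball x \<rho>) y * (v y - v x)" for y
  have "indicator \<Omega> y * (J (\<delta> x y) * (v y - v x)) = J (dist x y) * h y" for y
  proof -
    have "indicator \<Omega> y * (J (\<delta> x y) * (v y - v x)) = (indicator \<Omega> y * J (\<delta> x y)) * (v y - v x)"
      by (rule mult.assoc[symmetric])
    also have "\<dots> = J (dist x y) * h y"
      using quasi_euclidean_kernel_eq_on_cball[where J = J and y = y, OF \<delta> J(2) \<open>0 \<le> \<rho>\<close> ball]
      by (simp add: h_def)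
    finally show ?thesis .
  qed
  then have Lop_eq: "Lop J \<delta> \<Omega> v x = (\<integral>y. J (dist x y) * h y \<partial>lborel)"
    unfolding Lop_def by presburger
  obtain M where M: "\<And>y. y \<in> cball x \<rho> \<Longrightarrow> \<bar>v y\<bar> \<le> M"
    using compact_imp_bounded[OF compact_continuous_image[OF v_cont compact_cball]]
    unfolding bounded_iff by (metis imageI real_norm_def)
  have "(\<lambda>y. indicator (cball x \<rho>) y *\<^sub>R (v y - v x)) \<in> borel_measurable borel"
    using v_cont by (intro borel_measurable_continuous_on_indicator continuous_on_diff) auto
  then have h_meas: "h \<in> borel_measurable lborel"
    by (simp add: h_def[abs_def])
  have h_bounded: "\<bar>h y\<bar> \<le> 2 * M" for y
    using M[of y] M[OF \<open>x \<in> cball x \<rho>\<close>]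
    by (cases "y \<in> cball x \<rho>") (auto simp: h_def abs_le_iff)
  have int: "integrable lborel (\<lambda>y. J (dist x y) * h y)"
    using kernel_int h_meas h_bounded by (rule integrable_mult_bounded)
  have "J (dist x y) * h y \<le> J (dist x y) * (G - v x)" for y
    using G[of y] J_nonneg[of y] J(2)[of "dist x y"]
    by (cases "y \<in> cball x \<rho>") (simp_all add: h_def mult_left_mono)
  then have "(\<integral>y. J (dist x y) * h y \<partial>lborel) \<le> (\<integral>y. J (dist x y) * (G - v x) \<partial>lborel)"
    using int kernel_int by (intro integral_mono) auto
  also have "\<dots> = G - v x"
    using kernel_1 by simp
  finally show ?thesis
    unfolding Lop_eq .
qed

definition tail_barrier :: "real \<Rightarrow> nat \<Rightarrow> real \<Rightarrow> real" where
  "tail_barrier L k s = exp (L * s) * s ^ k / fact k"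

lemma tail_barrier_0: "tail_barrier L 0 s = exp (L * s)"
  by (simp add: tail_barrier_def)

lemma tail_barrier_nonneg: "0 \<le> s \<Longrightarrow> 0 \<le> tail_barrier L k s"
  by (simp add: tail_barrier_def)

lemma tail_barrier_has_real_derivative:
  "(tail_barrier L (Suc k) has_real_derivative L * tail_barrier L (Suc k) s + tail_barrier L k s) (at s)"
proof -
  have "(tail_barrier L (Suc k) has_real_derivative
      (exp (L * s) * L * s ^ Suc k + exp (L * s) * (Suc k * s ^ k)) / fact (Suc k)) (at s)"
    unfolding tail_barrier_def
    by (auto intro!: derivative_eq_intros) (cases k; simp add: algebra_simps)
  also have "(exp (L * s) * L * s ^ Suc k + exp (L * s) * (Suc k * s ^ k)) / fact (Suc k)
      = L * tail_barrier L (Suc k) s + tail_barrier L k s"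
    by (simp add: tail_barrier_def fact_Suc field_simps del: of_nat_Suc)
  finally show ?thesis .
qed

lemma tail_barrier_LIMSEQ_0: "(\<lambda>k. tail_barrier L k s) \<longlonglongrightarrow> 0"
proof -
  have "(\<lambda>k. exp (L * s) * (inverse (fact k) * s ^ k)) \<longlonglongrightarrow> exp (L * s) * 0"
    by (intro tendsto_mult tendsto_const summable_LIMSEQ_zero summable_exp)
  then show ?thesis
    by (simp add: tail_barrier_def field_simps)
qed

lemma tail_barrier_comparison:
  fixes v v' :: "real \<Rightarrow> real"
  assumes "T \<le> t"
    and v: "\<And>s. T \<le> s \<Longrightarrow> (v has_real_derivative v' s) (at s)"
    and "v T \<le> a"
    and v': "\<And>s. T \<le> s \<Longrightarrow> a < v s \<Longrightarrow>
      v' s \<le> a + tail_barrier L k (s - T) - v s + L * (v s - a)"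
  shows "v t \<le> a + tail_barrier L (Suc k) (t - T)"
proof (rule DERIV_comparison[OF \<open>T \<le> t\<close> v])
  define w where "w s = a + tail_barrier L (Suc k) (s - T)" for s
  define w' where "w' s = L * tail_barrier L (Suc k) (s - T) + tail_barrier L k (s - T)" for s
  show "(w has_real_derivative w' s) (at s)" for s
  proof -
    have "((\<lambda>s. tail_barrier L (Suc k) (s - T)) has_real_derivative w' s * 1) (at s)"
      unfolding w'_def
      by (rule DERIV_chain2[OF tail_barrier_has_real_derivative]) (auto intro!: derivative_eq_intros)
    from DERIV_add[OF DERIV_const[of a] this] show ?thesis
      by (simp add: w_def[abs_def])
  qed
  show "v T \<le> w T"
    using \<open>v T \<le> a\<close> by (simp add: w_def tail_barrier_def)
  fix s
  assume "T \<le> s" "s \<le> t" "w s < v s"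
  moreover have "a \<le> w s"
    using \<open>T \<le> s\<close> by (simp add: w_def tail_barrier_nonneg)
  ultimately have "v' s \<le> a + tail_barrier L k (s - T) - v s + L * (v s - a)"
    by (intro v') auto
  also have "\<dots> = w' s + (a - v s) + L * (v s - w s)"
    by (simp add: w_def w'_def algebra_simps)
  also have "\<dots> \<le> w' s + L * (v s - w s)"
    using \<open>a \<le> w s\<close> \<open>w s < v s\<close> by simp
  finally show "v' s - w' s \<le> L * (v s - w s)"
    by simp
qed

lemma bounded_imp_far_cball_subset_Compl:
  fixes K :: "(real \<times> 'b::real_normed_vector) set"
  assumes "bounded K"
  obtains R where "\<And>z. R \<le> \<bar>fst z\<bar> \<Longrightarrow> cball z r \<subseteq> - K"
proof -
  obtain B where B: "\<And>y. y \<in> K \<Longrightarrow> norm y \<le> B"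
    using assms unfolding bounded_iff by auto
  show thesis
  proof
    fix z :: "real \<times> 'b"
    assume z: "B + r + 1 \<le> \<bar>fst z\<bar>"
    show "cball z r \<subseteq> - K"
    proof
      fix y
      assume "y \<in> cball z r"
      then have "\<bar>fst z - fst y\<bar> \<le> r"
        using dist_fst_le[of z y] by (simp add: dist_real_def)
      moreover have "\<bar>fst y\<bar> \<le> norm y"
        by (metis norm_fst_le prod.collapse real_norm_def)
      ultimately have "B < norm y"
        using z by linarith
      then show "y \<in> - K"
        using B[of y] by (meson ComplI not_le)
    qed
  qed
qed

lemma mono_if_deriv_nonneg:
  fixes g :: "real \<Rightarrow> real"
  assumes "\<And>t. g differentiable at t" and "\<And>t. 0 \<le> deriv g t"
  shows "mono g"
proof (rule monoI)
  fix s t :: real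
  assume "s \<le> t"
  then show "g s \<le> g t"
    using assms by (intro DERIV_nonneg_imp_nondecreasing[of s t g])
      (auto simp: DERIV_deriv_iff_real_differentiable[symmetric])
qed

lemma tendsto_1_at_top_if_past_front:
  fixes u :: "real \<Rightarrow> real \<times> 'b::real_normed_vector \<Rightarrow> real"
  assumes "bounded (- \<Omega>)"
    and past: "\<forall>\<epsilon>>0. \<exists>T. \<forall>t\<le>T. \<forall>x\<in>closure \<Omega>. \<bar>u t x - \<phi> (fst x + c * t)\<bar> < \<epsilon>"
    and \<phi>: "(\<phi> \<longlongrightarrow> 1) at_top"
    and mono: "\<And>x. x \<in> closure \<Omega> \<Longrightarrow> mono (\<lambda>t. u t x)"
    and le_1: "\<And>t x. x \<in> closure \<Omega> \<Longrightarrow> u t x \<le> 1"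
  shows "((\<lambda>x1. u t (x1, x')) \<longlongrightarrow> 1) at_top"
proof (rule tendstoI)
  fix e :: real
  assume "0 < e"
  then obtain T where T: "\<And>s x. s \<le> T \<Longrightarrow> x \<in> closure \<Omega> \<Longrightarrow> \<bar>u s x - \<phi> (fst x + c * s)\<bar> < e / 2"
    using past by (meson half_gt_zero)
  obtain r where r: "\<And>y. r \<le> y \<Longrightarrow> dist (\<phi> y) 1 < e / 2"
    using tendstoD[OF \<phi>, of "e / 2"] \<open>0 < e\<close> unfolding eventually_at_top_linorder by auto
  obtain R where R: "\<And>z. R \<le> \<bar>fst z\<bar> \<Longrightarrow> cball z 0 \<subseteq> \<Omega>"
    using bounded_imp_far_cball_subset_Compl[OF \<open>bounded (- \<Omega>)\<close>, where r = 0] by auto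
  define s where "s = min t T"
  show "\<forall>\<^sub>F x1 in at_top. dist (u t (x1, x')) 1 < e"
    using eventually_ge_at_top[of "max R (r - c * s)"]
  proof (rule eventually_mono)
    fix x1
    assume x1: "max R (r - c * s) \<le> x1"
    then have x: "(x1, x') \<in> closure \<Omega>"
      using R[of "(x1, x')"] closure_subset by force
    have "\<bar>u s (x1, x') - \<phi> (x1 + c * s)\<bar> < e / 2"
      using T[OF _ x] by (simp add: s_def)
    moreover have "dist (\<phi> (x1 + c * s)) 1 < e / 2"
      using r x1 by simp
    moreover have "u s (x1, x') \<le> u t (x1, x')"
      using monoD[OF mono[OF x], of s t] by (simp add: s_def)
    moreover have "u t (x1, x') \<le> 1"
      using le_1[OF x] .
    ultimately show "dist (u t (x1, x')) 1 < e"
      unfolding dist_real_def by linarith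
  qed
qed

lemma past_front_le_on_left:
  fixes u :: "real \<Rightarrow> real \<times> 'b \<Rightarrow> real"
  assumes past: "\<forall>\<epsilon>>0. \<exists>T. \<forall>t\<le>T. \<forall>x\<in>E. \<bar>u t x - \<phi> (fst x + c * t)\<bar> < \<epsilon>"
    and \<phi>: "(\<phi> \<longlongrightarrow> 0) at_bot" and "0 < a"
  obtains T R where "T \<le> t" and "\<And>x. x \<in> E \<Longrightarrow> fst x \<le> R \<Longrightarrow> u T x \<le> a"
proof -
  obtain T0 where T0: "\<And>s x. s \<le> T0 \<Longrightarrow> x \<in> E \<Longrightarrow> \<bar>u s x - \<phi> (fst x + c * s)\<bar> < a / 2"
    using past \<open>0 < a\<close> by (meson half_gt_zero)
  obtain r where r: "\<And>y. y \<le> r \<Longrightarrow> dist (\<phi> y) 0 < a / 2"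
    using tendstoD[OF \<phi>, of "a / 2"] \<open>0 < a\<close> unfolding eventually_at_bot_linorder by auto
  define T where "T = min t T0"
  have "u T x \<le> a" if "x \<in> E" "fst x \<le> r - c * T" for x
  proof -
    have "\<bar>u T x - \<phi> (fst x + c * T)\<bar> < a / 2"
      using T0 that by (simp add: T_def)
    moreover have "\<bar>\<phi> (fst x + c * T)\<bar> < a / 2"
      using r[of "fst x + c * T"] that by simp
    ultimately show ?thesis
      by arith
  qed
  moreover have "T \<le> t"
    by (simp add: T_def)
  ultimately show thesis
    using that by blast
qed

locale nonlocal_reaction_solution =
  fixes \<Omega> :: "(real \<times> 'm::euclidean_space) set"
    and \<delta> :: "real \<times> 'm \<Rightarrow> real \<times> 'm \<Rightarrow> real"
    and J f :: "real \<Rightarrow> real"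
    and u :: "real \<Rightarrow> real \<times> 'm \<Rightarrow> real"
  assumes quasi_euclidean: "quasi_euclidean (closure \<Omega>) \<delta>"
    and A_J: "A_J J \<delta> \<Omega>"
    and continuous_on_u: "\<And>t. continuous_on (closure \<Omega>) (u t)"
    and u_has_real_derivative: "\<And>t x. x \<in> closure \<Omega> \<Longrightarrow>
      ((\<lambda>s. u s x) has_real_derivative Lop J \<delta> \<Omega> (u t) x + f (u t x)) (at t)"
    and u_gt_0: "\<And>t x. x \<in> closure \<Omega> \<Longrightarrow> 0 < u t x"
    and u_less_1: "\<And>t x. x \<in> closure \<Omega> \<Longrightarrow> u t x < 1"
begin

lemma left_tail_le_tail_barrier:
  assumes "0 \<le> \<rho>" and J_vanishes: "\<And>s. \<rho> < s \<Longrightarrow> J s = 0"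
    and far: "\<And>z. fst z \<le> R \<Longrightarrow> cball z \<rho> \<subseteq> \<Omega>"
    and "0 \<le> a" "0 \<le> L"
    and f_le: "\<And>v. a < v \<Longrightarrow> v < 1 \<Longrightarrow> f v \<le> L * (v - a)"
    and init: "\<And>x. x \<in> closure \<Omega> \<Longrightarrow> fst x \<le> R \<Longrightarrow> u T x \<le> a"
  shows "x \<in> closure \<Omega> \<Longrightarrow> fst x \<le> R - k * \<rho> \<Longrightarrow> T \<le> t \<Longrightarrow>
    u t x \<le> a + tail_barrier L k (t - T)"
proof (induction k arbitrary: x t)
  case 0
  have "u t x \<le> 1"
    using u_less_1[OF 0(1), of t] by simp
  also have "\<dots> \<le> exp (L * (t - T))"
    using 0(3) \<open>0 \<le> L\<close> by simp
  finally show ?case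
    using \<open>0 \<le> a\<close> by (simp add: tail_barrier_0)
next
  case (Suc k)
  have "fst x \<le> R"
    using Suc.prems(2) \<open>0 \<le> \<rho>\<close> by (smt (verit) of_nat_0_le_iff mult_nonneg_nonneg)
  then have ball: "cball x \<rho> \<subseteq> \<Omega>"
    by (rule far)
  have ball_left: "fst y \<le> R - k * \<rho>" if "y \<in> cball x \<rho>" for y
    using that Suc.prems(2) dist_fst_le[of x y] by (simp add: dist_real_def algebra_simps)
  have Lop_le: "Lop J \<delta> \<Omega> (u s) x \<le> a + tail_barrier L k (s - T) - u s x" if "T \<le> s" for s
  proof (rule Lop_le_sup_on_cball[OF quasi_euclidean A_J J_vanishes \<open>0 \<le> \<rho>\<close> ball])
    show "continuous_on (cball x \<rho>) (u s)"
      using ball closure_subset by (blast intro: continuous_on_subset[OF continuous_on_u])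
    show "u s y \<le> a + tail_barrier L k (s - T)" if "y \<in> cball x \<rho>" for y
      using Suc.IH[of y s] that ball ball_left closure_subset \<open>T \<le> s\<close> by blast
  qed
  show ?case
  proof (rule tail_barrier_comparison[OF Suc.prems(3)])
    show "((\<lambda>s. u s x) has_real_derivative Lop J \<delta> \<Omega> (u s) x + f (u s x)) (at s)" for s
      using u_has_real_derivative[OF Suc.prems(1)] .
    show "u T x \<le> a"
      using init[OF Suc.prems(1) \<open>fst x \<le> R\<close>] .
    fix s
    assume "T \<le> s" "a < u s x"
    then show "Lop J \<delta> \<Omega> (u s) x + f (u s x) \<le> a + tail_barrier L k (s - T) - u s x + L * (u s x - a)"
      using Lop_le[of s] f_le[of "u s x"] u_less_1[OF Suc.prems(1)] by simp
  qed
qed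

lemma tendsto_0_at_bot_if_past_front:
  assumes "bounded (- \<Omega>)" and "A_f f f' \<theta>"
    and past: "\<forall>\<epsilon>>0. \<exists>T. \<forall>t\<le>T. \<forall>x\<in>closure \<Omega>. \<bar>u t x - \<phi> (fst x + c * t)\<bar> < \<epsilon>"
    and \<phi>: "(\<phi> \<longlongrightarrow> 0) at_bot"
  shows "((\<lambda>x1. u t (x1, x')) \<longlongrightarrow> 0) at_bot"
proof (rule tendstoI)
  fix e :: real
  assume "0 < e"
  define a where "a = min \<theta> (e / 2)"
  have "0 < a" "a \<le> \<theta>" "a \<le> e / 2"
    using \<open>0 < e\<close> \<open>A_f f f' \<theta>\<close> by (auto simp: a_def A_f_def)
  obtain L where "0 \<le> L" and f_le: "\<And>v. a < v \<Longrightarrow> v < 1 \<Longrightarrow> f v \<le> L * (v - a)"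
    using A_f_le_linear[OF \<open>A_f f f' \<theta>\<close>] \<open>0 < a\<close> \<open>a \<le> \<theta>\<close> by (metis less_eq_real_def)
  obtain \<rho> where "0 < \<rho>" and J_vanishes: "\<And>s. \<rho> < s \<Longrightarrow> J s = 0"
    using A_J_vanishes_far[OF A_J] by blast
  obtain R0 where R0: "\<And>z. R0 \<le> \<bar>fst z\<bar> \<Longrightarrow> cball z \<rho> \<subseteq> \<Omega>"
    using bounded_imp_far_cball_subset_Compl[OF \<open>bounded (- \<Omega>)\<close>] by auto
  obtain T R1 where "T \<le> t" and init: "\<And>x. x \<in> closure \<Omega> \<Longrightarrow> fst x \<le> R1 \<Longrightarrow> u T x \<le> a"
    using past_front_le_on_left[OF past \<phi> \<open>0 < a\<close>] by blast
  define R where "R = min (- R0) R1"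
  have far: "cball z \<rho> \<subseteq> \<Omega>" if "fst z \<le> R" for z
    using that by (intro R0) (auto simp: R_def abs_if)
  have "\<forall>\<^sub>F k in sequentially. dist (tail_barrier L k (t - T)) 0 < e / 2"
    using \<open>0 < e\<close> by (intro tendstoD[OF tail_barrier_LIMSEQ_0]) simp
  then obtain k where "dist (tail_barrier L k (t - T)) 0 < e / 2"
    unfolding eventually_sequentially by blast
  then have k: "tail_barrier L k (t - T) < e / 2"
    unfolding dist_real_def by arith
  show "\<forall>\<^sub>F x1 in at_bot. dist (u t (x1, x')) 0 < e"
    using eventually_le_at_bot[of "R - k * \<rho>"]
  proof (rule eventually_mono)
    fix x1
    assume x1: "x1 \<le> R - k * \<rho>"
    then have "x1 \<le> R"
      using \<open>0 < \<rho>\<close> by (smt (verit) of_nat_0_le_iff mult_nonneg_nonneg)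
    then have x: "(x1, x') \<in> closure \<Omega>"
      using far[of "(x1, x')"] \<open>0 < \<rho>\<close> closure_subset by force
    have "u t (x1, x') \<le> a + tail_barrier L k (t - T)"
      using left_tail_le_tail_barrier[of \<rho> R a L T "(x1, x')" k t] J_vanishes far f_le init
        \<open>0 < \<rho>\<close> \<open>0 \<le> L\<close> \<open>0 < a\<close> \<open>T \<le> t\<close> x x1
      by (simp add: R_def)
    then show "dist (u t (x1, x')) 0 < e"
      using u_gt_0[OF x, of t] k \<open>a \<le> e / 2\<close> by (simp add: dist_real_def)
  qed
qed

end

theorem proposition5p5:
  fixes K :: "(real \<times> 'm::euclidean_space) set"
    and \<delta> :: "real \<times> 'm \<Rightarrow> real \<times> 'm \<Rightarrow> real"
    and J f f' \<phi> :: "real \<Rightarrow> real"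
    and \<theta> c \<alpha> :: real
    and u :: "real \<Rightarrow> real \<times> 'm \<Rightarrow> real"
  assumes K: "compact K"
    and \<Omega>_conn: "connected (- K)"
    and \<delta>: "quasi_euclidean (closure (- K)) \<delta>"
    and Af: "A_f f f' \<theta>"
    and AJ: "A_J J \<delta> (- K)"
    and ATW: "A_TW TYPE('m) J f \<phi> c"
    and And: "A_nd J f' \<delta> (- K)"
    and \<alpha>: "0 < \<alpha>" "\<alpha> < 1"
    and JB: "Besov_1inf \<alpha> \<delta> (- K) J"
    and u_cont: "continuous_on (UNIV \<times> closure (- K)) (\<lambda>(t, x). u t x)"
    and u_eq: "\<forall>t. \<forall>x\<in>closure (- K).
        ((\<lambda>s. u s x) has_real_derivative (Lop J \<delta> (- K) (u t) x + f (u t x))) (at t)"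
    and u_bounds: "\<forall>t. \<forall>x\<in>closure (- K). 0 < u t x \<and> u t x < 1"
    and u_incr: "\<forall>t. \<forall>x\<in>closure (- K). deriv (\<lambda>s. u s x) t > 0"
    and u_past: "\<forall>\<epsilon>>0. \<exists>T. \<forall>t\<le>T. \<forall>x\<in>closure (- K). \<bar>u t x - \<phi> (fst x + c * t)\<bar> < \<epsilon>"
  shows "\<forall>t x'. ((\<lambda>x1. u t (x1, x')) \<longlongrightarrow> 0) at_bot \<and> ((\<lambda>x1. u t (x1, x')) \<longlongrightarrow> 1) at_top"
proof -
  interpret nonlocal_reaction_solution "- K" \<delta> J f u
  proof
    show "continuous_on (closure (- K)) (u t)" for t
      using continuous_on_compose2[OF u_cont continuous_on_Pair[OF continuous_on_const continuous_on_id]]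
      by auto
  qed (use \<delta> AJ u_eq u_bounds in auto)
  have mono: "mono (\<lambda>t. u t x)" if "x \<in> closure (- K)" for x
  proof (rule mono_if_deriv_nonneg)
    show "(\<lambda>s. u s x) differentiable at t" for t
      using u_has_real_derivative[OF that] by (auto simp: real_differentiable_def)
    show "0 \<le> deriv (\<lambda>s. u s x) t" for t
      using u_incr that by (simp add: less_imp_le)
  qed
  have \<phi>: "(\<phi> \<longlongrightarrow> 0) at_bot" "(\<phi> \<longlongrightarrow> 1) at_top"
    using ATW unfolding A_TW_def by auto
  show ?thesis
  proof (intro allI conjI)
    fix t x'
    show "((\<lambda>x1. u t (x1, x')) \<longlongrightarrow> 0) at_bot"
      using compact_imp_bounded[OF K]
      by (intro tendsto_0_at_bot_if_past_front[OF _ Af u_past \<phi>(1)]) simp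
    show "((\<lambda>x1. u t (x1, x')) \<longlongrightarrow> 1) at_top"
      using compact_imp_bounded[OF K] u_less_1
      by (intro tendsto_1_at_top_if_past_front[OF _ u_past \<phi>(2) mono] less_imp_le) simp_all
  qed
qed

end
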